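(* Let $p,q$ be relatively prime positive integers, $k\ge1$ an integer and $\mu\in\mathbb{C}$. Let $\mathcal{F}_1$ be the real one-dimensional singular foliation on a disc $\{y\in\mathbb{C}:|y|<r\}$ defined by the real $1$-form $$\omega_1=\mathrm{Re}\left\{\left(\frac{\mu q}{y}+\frac{q}{y^{qk+1}}\right)\mathrm{d}y\right\}$$ (equivalently, by the real flow of the vector field $X=i\,\frac{y^{qk+1}}{1+\mu y^{qk}}\frac{\partial}{\partial y}$). Then, if $r>0$ is small enough, there exists a $C^\infty$ submersion $f:\{0<|y|<r\}\to\mathbb{R}$ such that (1) $f$ is a first integral of $\mathcal{F}_1$, and (2) $f(y)=g(y^{qk})$ for some $C^\infty$ submersion $g$.
   Context: $\mathcal{F}_1$ is the restriction to the section $\{(1,y)\}$ of the real analytic foliation defined by $\mathrm{Re}(\tau)$, where $\tau=(\mu-1)p\frac{\mathrm{d}x}{x}+\mu q\frac{\mathrm{d}y}{y}-\mathrm{d}\left(\frac{1}{k(x^py^q)^k}\right)$. A first integral of a foliation is a function constant along its leaves. *)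

theory Defs
  imports "HOL-Analysis.Analysis"
begin

fun iter_dderiv :: "'a::real_normed_vector list \<Rightarrow> ('a \<Rightarrow> 'b::real_normed_vector) \<Rightarrow> 'a \<Rightarrow> 'b" where
  "iter_dderiv [] f = f"
| "iter_dderiv (v # vs) f = (\<lambda>x. frechet_derivative (iter_dderiv vs f) (at x) v)"

definition smooth_on :: "'a::real_normed_vector set \<Rightarrow> ('a \<Rightarrow> 'b::real_normed_vector) \<Rightarrow> bool" where
  "smooth_on S f \<longleftrightarrow> (\<forall>vs. \<forall>x\<in>S. iter_dderiv vs f differentiable (at x))"

definition submersion_on :: "'a::real_normed_vector set \<Rightarrow> ('a \<Rightarrow> real) \<Rightarrow> bool" where
  "submersion_on S f \<longleftrightarrow> smooth_on S f \<and> (\<forall>x\<in>S. surj (frechet_derivative f (at x)))"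

text \<open>A real 1-form on (an open subset of) C = R^2 is a map point -> tangent vector -> real.\<close>
definition integral_curve :: "(complex \<Rightarrow> complex \<Rightarrow> real) \<Rightarrow> complex set \<Rightarrow> (real \<Rightarrow> complex) \<Rightarrow> real \<Rightarrow> real \<Rightarrow> bool" where
  "integral_curve \<omega> S \<gamma> a b \<longleftrightarrow> a \<le> b \<and>
     (\<forall>t\<in>{a..b}. \<gamma> t \<in> S \<and>
        (\<exists>d. (\<gamma> has_vector_derivative d) (at t within {a..b}) \<and> \<omega> (\<gamma> t) d = 0))"

definition first_integral :: "(complex \<Rightarrow> complex \<Rightarrow> real) \<Rightarrow> complex set \<Rightarrow> (complex \<Rightarrow> real) \<Rightarrow> bool" where
  "first_integral \<omega> S f \<longleftrightarrow> (\<forall>\<gamma> a b. integral_curve \<omega> S \<gamma> a b \<longrightarrow> f (\<gamma> a) = f (\<gamma> b))"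

definition omega1 :: "complex \<Rightarrow> nat \<Rightarrow> nat \<Rightarrow> complex \<Rightarrow> complex \<Rightarrow> real" where
  "omega1 \<mu> q k y v = Re ((\<mu> * of_nat q / y + of_nat q / y ^ (q * k + 1)) * v)"

end

theory Submission
  imports Defs "HOL-Computational_Algebra.Polynomial" "HOL-Complex_Analysis.Complex_Analysis"
    "HOL-Real_Asymp.Real_Asymp"
begin

text \<open>Under \<open>w = y ^ (q * k)\<close>, the form \<open>\<omega>\<^sub>1\<close> is \<open>1/k\<close> times the pullback of
  \<open>Re ((\<mu> / w + 1 / w\<^sup>2) dw)\<close>, which has the multivalued primitive \<open>Re (\<mu> log w - 1 / w)\<close>
  of period \<open>2 \<pi> Im \<mu>\<close> around 0. For small \<open>w\<close> this primitive tends to \<open>-\<infinity>\<close> along the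
  positive and to \<open>+\<infinity>\<close> along the negative real axis. So composing it, on the lower half plane,
  with a diffeomorphism of the line that is the identity near \<open>-\<infinity>\<close> and a translation by the
  period near \<open>+\<infinity>\<close> glues the branches into a single-valued submersion \<open>g\<close>; then
  \<open>f y = g (y ^ (q * k))\<close>. The diffeomorphism is built from \<open>exp (-1/t)\<close>, and smoothness
  follows because the functions built from it and from real parts of holomorphic functions
  are closed under differentiation.\<close>

section \<open>Flat functions and a smooth shift of the line\<close>

fun flat_poly :: "nat \<Rightarrow> real poly" where
  "flat_poly 0 = 1"
| "flat_poly (Suc n) = [:0, 0, 1:] * (flat_poly n - pderiv (flat_poly n))"

text \<open>\<open>flat_exp n\<close> is the n-th derivative of the flat function \<open>exp (-1/t)\<close>, extended by 0
  to \<open>t \<le> 0\<close>.\<close>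
definition flat_exp :: "nat \<Rightarrow> real \<Rightarrow> real" where
  "flat_exp n t = (if 0 < t then poly (flat_poly n) (inverse t) * exp (- inverse t) else 0)"

lemma poly_times_exp_neg_tendsto_0: "((\<lambda>s. poly P s * exp (- s)) \<longlongrightarrow> (0::real)) at_top"
proof -
  have "((\<lambda>s. \<Sum>i\<le>degree P. coeff P i * (s ^ i / exp s)) \<longlongrightarrow> (\<Sum>i\<le>degree P. coeff P i * 0)) at_top"
    by (intro tendsto_sum tendsto_mult tendsto_const tendsto_power_div_exp_0)
  moreover have "(\<lambda>s. poly P s * exp (- s)) = (\<lambda>s. \<Sum>i\<le>degree P. coeff P i * (s ^ i / exp s))"
    by (auto simp: poly_altdef sum_divide_distrib exp_minus field_simps)
  ultimately show ?thesis by simp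
qed

lemma flat_exp_nonpos [simp]: "t \<le> 0 \<Longrightarrow> flat_exp n t = 0"
  by (simp add: flat_exp_def)

lemma flat_exp_0_pos: "0 < t \<Longrightarrow> 0 < flat_exp 0 t"
  by (simp add: flat_exp_def)

lemma flat_exp_0_nonneg: "0 \<le> flat_exp 0 t"
  by (simp add: flat_exp_def)

lemma flat_exp_over_id_tendsto_0: "((\<lambda>t. flat_exp n t / t) \<longlongrightarrow> 0) (at_right 0)"
proof -
  have "((\<lambda>t. poly ([:0, 1:] * flat_poly n) (inverse t) * exp (- inverse t)) \<longlongrightarrow> 0) (at_right (0::real))"
    using filterlim_compose[OF poly_times_exp_neg_tendsto_0 filterlim_inverse_at_top_right] .
  moreover have "\<forall>\<^sub>F t in at_right 0. poly ([:0, 1:] * flat_poly n) (inverse t) * exp (- inverse t) = flat_exp n t / t"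
    using eventually_at_right_less by eventually_elim (simp add: flat_exp_def divide_inverse)
  ultimately show ?thesis by (rule Lim_transform_eventually)
qed

lemma flat_exp_has_real_derivative: "(flat_exp n has_real_derivative flat_exp (Suc n) t) (at t)"
proof -
  consider "t < 0" | "t = 0" | "t > 0" by linarith
  then show ?thesis
  proof cases
    case 1
    have "((\<lambda>x. 0) has_real_derivative flat_exp (Suc n) t) (at t)" using 1 by simp
    then show ?thesis
      by (rule has_field_derivative_transform_within_open[where S = "{..<0}"]) (use 1 in auto)
  next
    case 2
    have "\<forall>\<^sub>F x in at_left 0. 0 = flat_exp n x / x"
      by (rule eventually_mono[OF eventually_at_left_real[of "-1" 0]]) auto
    then have "((\<lambda>x. flat_exp n x / x) \<longlongrightarrow> 0) (at_left 0)"
      by (rule Lim_transform_eventually[OF tendsto_const])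
    with flat_exp_over_id_tendsto_0 have "((\<lambda>x. flat_exp n x / x) \<longlongrightarrow> 0) (at 0)"
      by (simp add: filterlim_at_split)
    then show ?thesis using 2 by (simp add: has_field_derivative_iff)
  next
    case 3
    let ?P = "flat_poly n"
    have "((\<lambda>x. poly ?P (inverse x) * exp (- inverse x)) has_real_derivative
        poly (pderiv ?P) (inverse t) * (- (inverse t ^ 2)) * exp (- inverse t) +
        poly ?P (inverse t) * (exp (- inverse t) * (inverse t ^ 2))) (at t)"
      using 3 by (auto intro!: derivative_eq_intros DERIV_chain2[OF poly_DERIV] simp: power2_eq_square)
    then have "((\<lambda>x. poly ?P (inverse x) * exp (- inverse x)) has_real_derivative flat_exp (Suc n) t) (at t)"
      using 3 by (simp add: flat_exp_def algebra_simps power2_eq_square)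
    then show ?thesis
      by (rule has_field_derivative_transform_within_open[where S = "{0<..}"]) (use 3 in \<open>auto simp: flat_exp_def\<close>)
  qed
qed

lemma isCont_flat_exp: "isCont (flat_exp n) t"
  using flat_exp_has_real_derivative by (rule DERIV_isCont)

definition step_denom :: "real \<Rightarrow> real" where
  "step_denom t = flat_exp 0 t + flat_exp 0 (1 - t)"

lemma step_denom_pos: "0 < step_denom t"
  using flat_exp_0_pos[of t] flat_exp_0_pos[of "1 - t"] flat_exp_0_nonneg[of t] flat_exp_0_nonneg[of "1 - t"]
  by (cases "t > 0") (auto simp: step_denom_def)

definition smooth_step :: "real \<Rightarrow> real" where
  "smooth_step t = flat_exp 0 t / step_denom t"

definition smooth_step_deriv :: "real \<Rightarrow> real" where
  "smooth_step_deriv t =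
     (flat_exp 1 t * flat_exp 0 (1 - t) + flat_exp 0 t * flat_exp 1 (1 - t)) / (step_denom t)\<^sup>2"

lemma step_denom_has_real_derivative:
  "(step_denom has_real_derivative flat_exp 1 t - flat_exp 1 (1 - t)) (at t)"
  unfolding step_denom_def[abs_def]
  by (auto intro!: derivative_eq_intros DERIV_chain2[OF flat_exp_has_real_derivative[of 0]])

lemma smooth_step_has_real_derivative: "(smooth_step has_real_derivative smooth_step_deriv t) (at t)"
proof -
  have "((\<lambda>t. flat_exp 0 t / step_denom t) has_real_derivative
      (flat_exp 1 t * step_denom t - flat_exp 0 t * (flat_exp 1 t - flat_exp 1 (1 - t))) / (step_denom t * step_denom t)) (at t)"
    using flat_exp_has_real_derivative[of 0] step_denom_has_real_derivative step_denom_pos[of t]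
    by (auto intro: DERIV_divide)
  then show ?thesis
    by (simp add: smooth_step_def[abs_def] smooth_step_deriv_def step_denom_def power2_eq_square algebra_simps)
qed

lemma smooth_step_nonpos: "t \<le> 0 \<Longrightarrow> smooth_step t = 0"
  by (simp add: smooth_step_def)

lemma smooth_step_ge_1: "1 \<le> t \<Longrightarrow> smooth_step t = 1"
  using step_denom_pos[of t] by (simp add: smooth_step_def step_denom_def)

lemma smooth_step_deriv_bounded: "\<exists>B>0. \<forall>t. \<bar>smooth_step_deriv t\<bar> \<le> B"
proof -
  have "isCont smooth_step_deriv t" for t
    using step_denom_pos[of t] unfolding smooth_step_deriv_def step_denom_def
    by (intro continuous_intros isCont_flat_exp isCont_o2[OF _ isCont_flat_exp]) auto
  then have "compact (smooth_step_deriv ` {0..1})"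
    by (intro compact_continuous_image continuous_at_imp_continuous_on) auto
  then obtain B where B: "B > 0" "\<And>t. t \<in> {0..1} \<Longrightarrow> \<bar>smooth_step_deriv t\<bar> \<le> B"
    by (auto dest!: compact_imp_bounded simp: bounded_pos)
  have "smooth_step_deriv t = 0" if "t \<notin> {0..1}" for t
    using that by (auto simp: smooth_step_deriv_def)
  with B show ?thesis by (metis abs_zero less_imp_le)
qed

definition step_deriv_bound :: real where
  "step_deriv_bound = (SOME B. B > 0 \<and> (\<forall>t. \<bar>smooth_step_deriv t\<bar> \<le> B))"

lemma step_deriv_bound_spec: "step_deriv_bound > 0" "\<bar>smooth_step_deriv t\<bar> \<le> step_deriv_bound"
  using someI_ex[OF smooth_step_deriv_bounded] unfolding step_deriv_bound_def by auto

text \<open>The window is wide enough for \<open>smooth_shift \<beta>\<close> to have positive derivative.\<close>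
definition shift_window :: "real \<Rightarrow> real" where
  "shift_window \<beta> = \<bar>\<beta>\<bar> * step_deriv_bound + 1"

definition smooth_shift :: "real \<Rightarrow> real \<Rightarrow> real" where
  "smooth_shift \<beta> s = s - \<beta> * smooth_step ((s + shift_window \<beta>) / (2 * shift_window \<beta>))"

definition smooth_shift_deriv :: "real \<Rightarrow> real \<Rightarrow> real" where
  "smooth_shift_deriv \<beta> s =
     1 - \<beta> / (2 * shift_window \<beta>) * smooth_step_deriv ((s + shift_window \<beta>) / (2 * shift_window \<beta>))"

lemma shift_window_pos: "shift_window \<beta> > 0"
  using step_deriv_bound_spec(1) by (simp add: shift_window_def add_nonneg_pos)

lemma smooth_shift_has_real_derivative:
  "(smooth_shift \<beta> has_real_derivative smooth_shift_deriv \<beta> s) (at s)"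
proof -
  have "((\<lambda>s. (s + shift_window \<beta>) / (2 * shift_window \<beta>)) has_real_derivative 1 / (2 * shift_window \<beta>)) (at s)"
    using shift_window_pos[of \<beta>] by (auto intro!: derivative_eq_intros)
  from DERIV_chain2[OF smooth_step_has_real_derivative this] show ?thesis
    unfolding smooth_shift_def[abs_def] smooth_shift_deriv_def
    by (auto intro!: derivative_eq_intros)
qed

lemma smooth_shift_deriv_pos: "smooth_shift_deriv \<beta> s > 0"
proof -
  let ?W = "shift_window \<beta>" and ?t = "(s + shift_window \<beta>) / (2 * shift_window \<beta>)"
  have W: "?W > 0" by (rule shift_window_pos)
  have "\<bar>\<beta> / (2 * ?W) * smooth_step_deriv ?t\<bar> = \<bar>\<beta>\<bar> * \<bar>smooth_step_deriv ?t\<bar> / (2 * ?W)"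
    using W by (simp add: abs_mult)
  also have "\<dots> \<le> \<bar>\<beta>\<bar> * step_deriv_bound / (2 * ?W)"
    using W step_deriv_bound_spec(2) by (intro divide_right_mono mult_left_mono) auto
  also have "\<dots> < 1"
    using W step_deriv_bound_spec(1) by (simp add: shift_window_def field_simps)
  finally show ?thesis unfolding smooth_shift_deriv_def by linarith
qed

lemma smooth_shift_left: "s \<le> - shift_window \<beta> \<Longrightarrow> smooth_shift \<beta> s = s"
  using shift_window_pos[of \<beta>]
  by (simp add: smooth_shift_def smooth_step_nonpos divide_nonpos_pos)

lemma smooth_shift_right: "shift_window \<beta> \<le> s \<Longrightarrow> smooth_shift \<beta> s = s - \<beta>"
  using shift_window_pos[of \<beta>] by (simp add: smooth_shift_def smooth_step_ge_1 field_simps)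

lemma smooth_shift_0 [simp]: "smooth_shift 0 s = s"
  by (simp add: smooth_shift_def)

section \<open>Smoothness of derivative-closed families\<close>

definition derivative_closed :: "'a::real_normed_vector set \<Rightarrow> ('a \<Rightarrow> 'b::real_normed_vector) set \<Rightarrow> bool"
  where "derivative_closed S A \<longleftrightarrow>
    (\<forall>h\<in>A. \<exists>D. (\<forall>x\<in>S. (h has_derivative D x) (at x)) \<and> (\<forall>v. (\<lambda>x. D x v) \<in> A))"

lemma smooth_on_if_derivative_closed:
  assumes "open S" "derivative_closed S A" "h \<in> A"
  shows "smooth_on S h"
proof -
  note closed = assms(2)[unfolded derivative_closed_def]
  have derivative_transfer: "(iter_dderiv vs h has_derivative D x) (at x)"
    if "\<forall>x\<in>S. (k has_derivative D x) (at x)" "\<forall>x\<in>S. iter_dderiv vs h x = k x" "x \<in> S" for vs k D x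
    using has_derivative_transform_within_open[OF that(1)[rule_format, OF that(3)] \<open>open S\<close> that(3)] that(2)
    by simp
  have iter_in_A: "\<exists>k\<in>A. \<forall>x\<in>S. iter_dderiv vs h x = k x" for vs
  proof (induction vs)
    case Nil
    then show ?case using \<open>h \<in> A\<close> by auto
  next
    case (Cons v vs)
    then obtain k where k: "k \<in> A" "\<forall>x\<in>S. iter_dderiv vs h x = k x" by blast
    obtain D where D: "\<forall>x\<in>S. (k has_derivative D x) (at x)" "\<forall>v. (\<lambda>x. D x v) \<in> A"
      using closed k(1) by blast
    have "iter_dderiv (v # vs) h x = D x v" if "x \<in> S" for x
      using derivative_transfer[OF D(1) k(2) that] by (simp add: frechet_derivative_at[symmetric])
    then show ?case using D(2) by (intro bexI[of _ "\<lambda>x. D x v"]) auto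
  qed
  have "iter_dderiv vs h differentiable (at x)" if "x \<in> S" for vs x
  proof -
    obtain k where "k \<in> A" "\<forall>x\<in>S. iter_dderiv vs h x = k x" using iter_in_A by blast
    with closed derivative_transfer that show ?thesis by (metis differentiable_def)
  qed
  then show ?thesis by (simp add: smooth_on_def)
qed

text \<open>The affine arguments \<open>c + d * b x\<close> are needed because differentiating \<open>step_denom\<close>
  produces \<open>flat_exp 1 (1 - t)\<close>.\<close>
inductive_set flat_alg :: "('a \<Rightarrow> real) set \<Rightarrow> ('a \<Rightarrow> real) set" for B where
  base: "b \<in> B \<Longrightarrow> b \<in> flat_alg B"
| const: "(\<lambda>x. c) \<in> flat_alg B"
| flat_exp: "b \<in> B \<Longrightarrow> (\<lambda>x. flat_exp n (c + d * b x)) \<in> flat_alg B"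
| inverse_step_denom: "b \<in> B \<Longrightarrow> (\<lambda>x. inverse (step_denom (c + d * b x))) \<in> flat_alg B"
| add: "f \<in> flat_alg B \<Longrightarrow> g \<in> flat_alg B \<Longrightarrow> (\<lambda>x. f x + g x) \<in> flat_alg B"
| mult: "f \<in> flat_alg B \<Longrightarrow> g \<in> flat_alg B \<Longrightarrow> (\<lambda>x. f x * g x) \<in> flat_alg B"

lemma flat_alg_derivative_closed:
  fixes B :: "('a::real_normed_vector \<Rightarrow> real) set"
  assumes "derivative_closed S B"
  shows "derivative_closed S (flat_alg B)"
  unfolding derivative_closed_def
proof
  note base_closed = assms[unfolded derivative_closed_def]
  fix h assume "h \<in> flat_alg B"
  then show "\<exists>D. (\<forall>x\<in>S. (h has_derivative D x) (at x)) \<and> (\<forall>v. (\<lambda>x. D x v) \<in> flat_alg B)"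
  proof induction
    case (base b)
    then show ?case using base_closed by (blast intro: flat_alg.base)
  next
    case (const c)
    show ?case by (intro exI[of _ "\<lambda>x v. 0"]) (auto intro: flat_alg.const)
  next
    case (flat_exp b n c d)
    obtain D where D: "\<forall>x\<in>S. (b has_derivative D x) (at x)" "\<forall>v. (\<lambda>x. D x v) \<in> B"
      using base_closed flat_exp(1) by blast
    let ?D = "\<lambda>x v. d * D x v * flat_exp (Suc n) (c + d * b x)"
    have "((\<lambda>x. flat_exp n (c + d * b x)) has_derivative ?D x) (at x)" if "x \<in> S" for x
      using DERIV_compose_FDERIV[OF flat_exp_has_real_derivative
          has_derivative_add[OF has_derivative_const has_derivative_mult_right[OF D(1)[rule_format, OF that]]]]
      by (simp add: algebra_simps)
    moreover have "(\<lambda>x. ?D x v) \<in> flat_alg B" for v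
      using D(2) flat_exp by (intro flat_alg.intros) auto
    ultimately show ?case by (intro exI[of _ ?D]) blast
  next
    case (inverse_step_denom b c d)
    obtain D where D: "\<forall>x\<in>S. (b has_derivative D x) (at x)" "\<forall>v. (\<lambda>x. D x v) \<in> B"
      using base_closed inverse_step_denom(1) by blast
    let ?t = "\<lambda>x. c + d * b x" and ?inv = "\<lambda>x. inverse (step_denom (c + d * b x))"
    let ?D = "\<lambda>x v. (- 1) * (?inv x * ?inv x) * (d * D x v) *
       (flat_exp 1 (c + d * b x) + (- 1) * flat_exp 1 ((1 - c) + (- d) * b x))"
    have "(?inv has_derivative ?D x) (at x)" if "x \<in> S" for x
    proof -
      have "(?t has_derivative (\<lambda>v. d * D x v)) (at x)"
        using has_derivative_add[OF has_derivative_const has_derivative_mult_right[OF D(1)[rule_format, OF that]]]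
        by simp
      from DERIV_compose_FDERIV[OF step_denom_has_real_derivative this]
      have "((\<lambda>x. step_denom (?t x)) has_derivative
          (\<lambda>v. d * D x v * (flat_exp 1 (?t x) - flat_exp 1 (1 - ?t x)))) (at x)" .
      from DERIV_compose_FDERIV[OF DERIV_inverse[OF step_denom_pos[THEN less_imp_neq, symmetric]] this]
      show ?thesis
        by (rule has_derivative_eq_rhs) (simp add: fun_eq_iff algebra_simps power2_eq_square)
    qed
    moreover have "(\<lambda>x. ?D x v) \<in> flat_alg B" for v
      by (intro flat_alg.intros D(2)[rule_format] inverse_step_denom)
    ultimately show ?case by (intro exI[of _ ?D]) blast
  next
    case (add f g)
    then obtain Df Dg where "\<forall>x\<in>S. (f has_derivative Df x) (at x)" "\<forall>v. (\<lambda>x. Df x v) \<in> flat_alg B"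
      "\<forall>x\<in>S. (g has_derivative Dg x) (at x)" "\<forall>v. (\<lambda>x. Dg x v) \<in> flat_alg B" by blast
    then show ?case
      by (intro exI[of _ "\<lambda>x v. Df x v + Dg x v"]) (auto intro!: has_derivative_add flat_alg.add)
  next
    case (mult f g)
    then obtain Df Dg where "\<forall>x\<in>S. (f has_derivative Df x) (at x)" "\<forall>v. (\<lambda>x. Df x v) \<in> flat_alg B"
      "\<forall>x\<in>S. (g has_derivative Dg x) (at x)" "\<forall>v. (\<lambda>x. Dg x v) \<in> flat_alg B" by blast
    with mult show ?case
      by (intro exI[of _ "\<lambda>x v. f x * Dg x v + Df x v * g x"])
         (auto intro!: has_derivative_mult flat_alg.add flat_alg.mult)
  qed
qed

lemma smooth_shift_comp_in_flat_alg:
  assumes "b \<in> B"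
  shows "(\<lambda>x. smooth_shift \<beta> (b x)) \<in> flat_alg B"
proof -
  let ?W = "shift_window \<beta>"
  have window: "(s + ?W) / (2 * ?W) = 1 / 2 + 1 / (2 * ?W) * s" for s
    using shift_window_pos[of \<beta>] by (simp add: field_simps)
  have shift_eq: "smooth_shift \<beta> s = s + (- \<beta>) * (flat_exp 0 (1 / 2 + 1 / (2 * ?W) * s) *
      inverse (step_denom (1 / 2 + 1 / (2 * ?W) * s)))" for s
    unfolding smooth_shift_def smooth_step_def window
    by (simp only: divide_inverse mult_minus_left diff_conv_add_uminus)
  have "(\<lambda>x. b x + (- \<beta>) * (flat_exp 0 (1 / 2 + 1 / (2 * ?W) * b x) *
      inverse (step_denom (1 / 2 + 1 / (2 * ?W) * b x)))) \<in> flat_alg B"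
    by (intro flat_alg.add flat_alg.mult flat_alg.const flat_alg.flat_exp flat_alg.inverse_step_denom
        flat_alg.base[OF assms] assms)
  then show ?thesis by (simp only: shift_eq)
qed

lemma Re_holomorphic_has_derivative:
  assumes "K holomorphic_on S" "open S" "x \<in> S"
  shows "((\<lambda>z. Re (K z)) has_derivative (\<lambda>v. Re (deriv K x * v))) (at x)"
  using bounded_linear.has_derivative[OF bounded_linear_Re holomorphic_derivI[OF assms, unfolded has_field_derivative_def]] .

lemma Re_holomorphic_derivative_closed:
  assumes "open S"
  shows "derivative_closed S {(\<lambda>z. Re (K z)) | K. K holomorphic_on S}"
  unfolding derivative_closed_def
proof
  fix b assume "b \<in> {(\<lambda>z. Re (K z)) | K. K holomorphic_on S}"
  then obtain K where K: "b = (\<lambda>z. Re (K z))" "K holomorphic_on S" by blast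
  have "(\<lambda>z. deriv K z * v) holomorphic_on S" for v
    using K(2) \<open>open S\<close> by (intro holomorphic_intros)
  then have "(\<lambda>z. Re (deriv K z * v)) \<in> {(\<lambda>z. Re (K z)) | K. K holomorphic_on S}" for v
    by (intro CollectI exI[of _ "\<lambda>z. deriv K z * v"] conjI refl)
  then show "\<exists>D. (\<forall>x\<in>S. (b has_derivative D x) (at x)) \<and>
      (\<forall>v. (\<lambda>x. D x v) \<in> {(\<lambda>z. Re (K z)) | K. K holomorphic_on S})"
    unfolding K(1) using Re_holomorphic_has_derivative[OF K(2) \<open>open S\<close>]
    by (intro exI[of _ "\<lambda>x v. Re (deriv K x * v)"]) blast
qed

lemma smooth_on_smooth_shift_Re_holomorphic:
  assumes "open S" "K holomorphic_on S"
  shows "smooth_on S (\<lambda>z. smooth_shift \<beta> (Re (K z)))"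
proof (rule smooth_on_if_derivative_closed[OF assms(1)])
  show "derivative_closed S (flat_alg {(\<lambda>z. Re (K z)) | K. K holomorphic_on S})"
    by (rule flat_alg_derivative_closed[OF Re_holomorphic_derivative_closed[OF assms(1)]])
  show "(\<lambda>z. smooth_shift \<beta> (Re (K z))) \<in> flat_alg {(\<lambda>z. Re (K z)) | K. K holomorphic_on S}"
    using assms(2) by (intro smooth_shift_comp_in_flat_alg) blast
qed

section \<open>Local criteria for smoothness, submersions and first integrals\<close>

lemma iter_dderiv_cong_open:
  assumes "open U" "\<And>x. x \<in> U \<Longrightarrow> g x = h x" "z \<in> U"
  shows "iter_dderiv vs g z = iter_dderiv vs h z"
  using assms(3)
proof (induction vs arbitrary: z)
  case Nil
  then show ?case using assms(2) by simp
next
  case (Cons v vs)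
  have "(iter_dderiv vs g has_derivative D) (at z) \<longleftrightarrow> (iter_dderiv vs h has_derivative D) (at z)" for D
  proof
    assume "(iter_dderiv vs g has_derivative D) (at z)"
    then show "(iter_dderiv vs h has_derivative D) (at z)"
      by (rule has_derivative_transform_within_open[OF _ assms(1) Cons.prems]) (simp add: Cons.IH)
  next
    assume "(iter_dderiv vs h has_derivative D) (at z)"
    then show "(iter_dderiv vs g has_derivative D) (at z)"
      by (rule has_derivative_transform_within_open[OF _ assms(1) Cons.prems]) (simp add: Cons.IH)
  qed
  then show ?case by (simp add: frechet_derivative_def)
qed

lemma smooth_on_local:
  assumes "\<And>x. x \<in> S \<Longrightarrow> \<exists>U h. open U \<and> x \<in> U \<and> smooth_on U h \<and> (\<forall>z\<in>U. g z = h z)"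
  shows "smooth_on S g"
  unfolding smooth_on_def
proof (intro allI ballI)
  fix vs x assume "x \<in> S"
  then obtain U h where U: "open U" "x \<in> U" "smooth_on U h" "\<forall>z\<in>U. g z = h z"
    using assms by blast
  then obtain D where "(iter_dderiv vs h has_derivative D) (at x)"
    unfolding smooth_on_def differentiable_def by blast
  then have "(iter_dderiv vs g has_derivative D) (at x)"
    by (rule has_derivative_transform_within_open[OF _ U(1,2)])
      (rule iter_dderiv_cong_open[OF U(1)], use U(4) in auto)
  then show "iter_dderiv vs g differentiable (at x)" by (auto simp: differentiable_def)
qed

lemma first_integral_if_derivative_multiple:
  assumes "\<And>x. x \<in> S \<Longrightarrow> \<exists>l. (f has_derivative (\<lambda>v. l * \<omega> x v)) (at x)"
  shows "first_integral \<omega> S f"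
  unfolding first_integral_def integral_curve_def
proof (intro allI impI)
  fix \<gamma> :: "real \<Rightarrow> complex" and a b
  assume curve: "a \<le> b \<and> (\<forall>t\<in>{a..b}. \<gamma> t \<in> S \<and>
    (\<exists>d. (\<gamma> has_vector_derivative d) (at t within {a..b}) \<and> \<omega> (\<gamma> t) d = 0))"
  have "((f \<circ> \<gamma>) has_derivative (\<lambda>s. 0)) (at t within {a..b})" if t: "t \<in> {a..b}" for t
  proof -
    have "\<gamma> t \<in> S" using curve t by blast
    then obtain l where l: "(f has_derivative (\<lambda>v. l * \<omega> (\<gamma> t) v)) (at (\<gamma> t))"
      using assms by blast
    obtain d where d: "(\<gamma> has_vector_derivative d) (at t within {a..b})" "\<omega> (\<gamma> t) d = 0"
      using curve t by blast
    have "((f \<circ> \<gamma>) has_derivative (\<lambda>s. l * \<omega> (\<gamma> t) (s *\<^sub>R d))) (at t within {a..b})"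
      using diff_chain_within[OF d(1)[unfolded has_vector_derivative_def] has_derivative_at_withinI[OF l]]
      by (simp add: o_def)
    moreover have "l * \<omega> (\<gamma> t) (s *\<^sub>R d) = s * (l * \<omega> (\<gamma> t) d)" for s
      using linear_scale[OF has_derivative_linear[OF l]] by simp
    ultimately show ?thesis using d(2) by simp
  qed
  then obtain C where "\<forall>t\<in>{a..b}. (f \<circ> \<gamma>) t = C"
    using has_derivative_zero_constant[of "{a..b}" "f \<circ> \<gamma>"] by auto
  then show "f (\<gamma> a) = f (\<gamma> b)" using curve by auto
qed

definition shifted_Re_germ :: "(complex \<Rightarrow> real) \<Rightarrow> complex \<Rightarrow> complex \<Rightarrow> bool" where
  "shifted_Re_germ g x c \<longleftrightarrow> (\<exists>U K \<beta>. open U \<and> x \<in> U \<and> K holomorphic_on U \<and> deriv K x = c \<and>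
     (\<forall>z\<in>U. g z = smooth_shift \<beta> (Re (K z))))"

lemma shifted_Re_germE:
  assumes "shifted_Re_germ g x c"
  obtains U K \<beta> where "open U" "x \<in> U" "K holomorphic_on U" "deriv K x = c"
    "\<And>z. z \<in> U \<Longrightarrow> g z = smooth_shift \<beta> (Re (K z))"
  using assms unfolding shifted_Re_germ_def by blast

lemma shifted_Re_germ_has_derivative:
  assumes "shifted_Re_germ g x c"
  shows "\<exists>l>0. (g has_derivative (\<lambda>v. l * Re (c * v))) (at x)"
proof -
  obtain U K \<beta> where U: "open U" "x \<in> U" "K holomorphic_on U" "deriv K x = c"
    "\<And>z. z \<in> U \<Longrightarrow> g z = smooth_shift \<beta> (Re (K z))"
    using assms by (rule shifted_Re_germE) blast
  let ?l = "smooth_shift_deriv \<beta> (Re (K x))"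
  have "((\<lambda>z. smooth_shift \<beta> (Re (K z))) has_derivative (\<lambda>v. ?l * Re (c * v))) (at x)"
    using DERIV_compose_FDERIV[OF smooth_shift_has_real_derivative Re_holomorphic_has_derivative[OF U(3,1,2)]]
    by (rule has_derivative_eq_rhs) (simp add: U(4) fun_eq_iff)
  then have "(g has_derivative (\<lambda>v. ?l * Re (c * v))) (at x)"
    by (rule has_derivative_transform_within_open[OF _ U(1,2)]) (simp add: U(5))
  with smooth_shift_deriv_pos show ?thesis by blast
qed

lemma smooth_on_if_shifted_Re_germs:
  assumes "\<And>x. x \<in> S \<Longrightarrow> \<exists>c. shifted_Re_germ g x c"
  shows "smooth_on S g"
proof (rule smooth_on_local)
  fix x assume "x \<in> S"
  then obtain c where "shifted_Re_germ g x c" using assms by blast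
  then obtain U K \<beta> where U: "open U" "x \<in> U" "K holomorphic_on U"
    "\<And>z. z \<in> U \<Longrightarrow> g z = smooth_shift \<beta> (Re (K z))"
    by (rule shifted_Re_germE) blast
  then show "\<exists>U h. open U \<and> x \<in> U \<and> smooth_on U h \<and> (\<forall>z\<in>U. g z = h z)"
    using smooth_on_smooth_shift_Re_holomorphic[OF U(1,3)] by blast
qed

lemma surj_scaled_Re_mult: "l \<noteq> 0 \<Longrightarrow> c \<noteq> 0 \<Longrightarrow> surj (\<lambda>v. l * Re (c * v))"
  by (rule surjI[where f = "\<lambda>t. of_real (t / l) / c"]) simp

lemma submersion_on_if_shifted_Re_germs:
  assumes "\<And>x. x \<in> S \<Longrightarrow> \<exists>c. c \<noteq> 0 \<and> shifted_Re_germ g x c"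
  shows "submersion_on S g"
  unfolding submersion_on_def
proof (intro conjI ballI)
  show "smooth_on S g"
    by (rule smooth_on_if_shifted_Re_germs) (use assms in blast)
next
  fix x assume "x \<in> S"
  then obtain c where "c \<noteq> 0" "shifted_Re_germ g x c" using assms by blast
  then obtain l where "l > 0" "(g has_derivative (\<lambda>v. l * Re (c * v))) (at x)"
    using shifted_Re_germ_has_derivative by blast
  then have "frechet_derivative g (at x) = (\<lambda>v. l * Re (c * v))"
    by (simp add: frechet_derivative_at[symmetric])
  with surj_scaled_Re_mult[of l c] \<open>c \<noteq> 0\<close> \<open>l > 0\<close> show "surj (frechet_derivative g (at x))"
    by simp
qed

lemma shifted_Re_germ_compose:
  assumes "shifted_Re_germ g (h y) c" "open T" "y \<in> T" "h holomorphic_on T"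
  shows "shifted_Re_germ (\<lambda>z. g (h z)) y (c * deriv h y)"
proof -
  obtain U K \<beta> where U: "open U" "h y \<in> U" "K holomorphic_on U" "deriv K (h y) = c"
    "\<And>z. z \<in> U \<Longrightarrow> g z = smooth_shift \<beta> (Re (K z))"
    using assms(1) by (rule shifted_Re_germE) blast
  let ?V = "T \<inter> h -` U"
  have "open ?V"
    using assms(2,4) U(1) by (intro continuous_open_preimage holomorphic_on_imp_continuous_on)
  moreover have "y \<in> ?V"
    using assms(3) U(2) by simp
  moreover have "(K \<circ> h) holomorphic_on ?V"
    by (rule holomorphic_on_compose_gen[OF holomorphic_on_subset[OF assms(4)] U(3)]) auto
  moreover have "deriv (K \<circ> h) y = c * deriv h y"
    using deriv_chain[OF holomorphic_on_imp_differentiable_at[OF assms(4,2,3)]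
        holomorphic_on_imp_differentiable_at[OF U(3,1,2)]] U(4)
    by simp
  moreover have "g (h z) = smooth_shift \<beta> (Re ((K \<circ> h) z))" if "z \<in> ?V" for z
    using U(5) that by simp
  ultimately show ?thesis
    unfolding shifted_Re_germ_def by blast
qed

section \<open>The glued primitive\<close>

definition log_primitive :: "complex \<Rightarrow> complex \<Rightarrow> complex" where
  "log_primitive \<mu> w = \<mu> * Ln w - 1 / w"

definition log_primitive_neg :: "complex \<Rightarrow> complex \<Rightarrow> complex" where
  "log_primitive_neg \<mu> w = \<mu> * (Ln (- w) + \<i> * pi) - 1 / w"

definition period :: "complex \<Rightarrow> real" where
  "period \<mu> = 2 * pi * Im \<mu>"

text \<open>Crossing the negative real axis downwards, \<open>Re (log_primitive \<mu>)\<close> jumps by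
  \<open>period \<mu>\<close>. Near 0 it is large near that axis, where \<open>smooth_shift (period \<mu>)\<close> undoes
  the jump, and very negative near the positive axis, where \<open>smooth_shift\<close> is the identity.\<close>
definition glued_integral :: "complex \<Rightarrow> complex \<Rightarrow> real" where
  "glued_integral \<mu> w =
     (if Im w < 0 then smooth_shift (period \<mu>) (Re (log_primitive \<mu> w)) else Re (log_primitive \<mu> w))"

lemma log_primitive_neg_upper:
  assumes "0 \<le> Im w" "Re w < 0"
  shows "log_primitive_neg \<mu> w = log_primitive \<mu> w"
proof -
  have "w \<noteq> 0" using assms by auto
  then have "Ln (- w) = Ln w - \<i> * pi" using assms by (auto simp: Ln_minus)
  then show ?thesis by (simp add: log_primitive_def log_primitive_neg_def)
qed

lemma Re_log_primitive_neg_lower: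
  assumes "Im w < 0"
  shows "Re (log_primitive_neg \<mu> w) = Re (log_primitive \<mu> w) - period \<mu>"
proof -
  have "w \<noteq> 0" using assms by auto
  then have "Ln (- w) = Ln w + \<i> * pi" using assms by (simp add: Ln_minus)
  then show ?thesis by (simp add: log_primitive_def log_primitive_neg_def period_def algebra_simps)
qed

lemma log_primitive_has_field_derivative:
  assumes "w \<notin> \<real>\<^sub>\<le>\<^sub>0"
  shows "(log_primitive \<mu> has_field_derivative \<mu> / w + 1 / w\<^sup>2) (at w)"
proof -
  have "w \<noteq> 0" using assms by auto
  then show ?thesis
    unfolding log_primitive_def[abs_def] using assms
    by (auto intro!: derivative_eq_intros simp: power2_eq_square field_simps)
qed

lemma log_primitive_neg_has_field_derivative:
  assumes "- w \<notin> \<real>\<^sub>\<le>\<^sub>0"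
  shows "(log_primitive_neg \<mu> has_field_derivative \<mu> / w + 1 / w\<^sup>2) (at w)"
proof -
  have "w \<noteq> 0" using assms by auto
  have "((\<lambda>w. Ln (- w)) has_field_derivative inverse (- w) * - 1) (at w)"
    by (rule DERIV_chain2[OF has_field_derivative_Ln[OF assms] DERIV_minus[OF DERIV_ident]])
  then have "((\<lambda>w. Ln (- w)) has_field_derivative 1 / w) (at w)"
    by (rule DERIV_cong) (simp add: divide_inverse)
  moreover have "((\<lambda>w. 1 / w) has_field_derivative - (1 / w\<^sup>2)) (at w)"
    using \<open>w \<noteq> 0\<close> by (auto intro!: derivative_eq_intros simp: power2_eq_square field_simps)
  ultimately have "((\<lambda>w. \<mu> * (Ln (- w) + \<i> * pi) - 1 / w) has_field_derivative
      \<mu> * (1 / w + 0) - - (1 / w\<^sup>2)) (at w)"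
    by (intro DERIV_diff DERIV_cmult DERIV_add DERIV_const)
  then show ?thesis
    by (simp add: log_primitive_neg_def[abs_def])
qed

lemma log_primitive_holomorphic_on:
  assumes "\<And>w. w \<in> U \<Longrightarrow> w \<notin> \<real>\<^sub>\<le>\<^sub>0"
  shows "log_primitive \<mu> holomorphic_on U"
  unfolding log_primitive_def[abs_def]
  by (intro holomorphic_intros) (use assms assms[of 0] in \<open>auto simp: complex_nonpos_Reals_iff\<close>)

lemma log_primitive_neg_holomorphic_on:
  assumes "\<And>w. w \<in> U \<Longrightarrow> - w \<notin> \<real>\<^sub>\<le>\<^sub>0"
  shows "log_primitive_neg \<mu> holomorphic_on U"
  unfolding log_primitive_neg_def[abs_def]
  by (intro holomorphic_intros) (use assms assms[of 0] in \<open>auto simp: complex_nonpos_Reals_iff\<close>)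

lemma Re_log_primitive_of_real: "0 < u \<Longrightarrow> Re (log_primitive \<mu> (of_real u)) = Re \<mu> * ln u - 1 / u"
  by (simp add: log_primitive_def Ln_of_real)

lemma Re_log_primitive_neg_of_real:
  "0 < u \<Longrightarrow> Re (log_primitive_neg \<mu> (- of_real u)) = Re \<mu> * ln u - pi * Im \<mu> + 1 / u"
  by (simp add: log_primitive_neg_def Ln_of_real)

text \<open>\<open>R \<le> 1\<close> keeps \<open>y ^ N\<close> in the disc, \<open>R * cmod \<mu> < 1\<close> keeps \<open>\<mu> / w + 1 / w\<^sup>2\<close>
  away from 0, and the last condition makes the gluing in \<open>glued_integral\<close> trivial near the
  real axis.\<close>
definition admissible_radius :: "complex \<Rightarrow> real \<Rightarrow> bool" where
  "admissible_radius \<mu> R \<longleftrightarrow> 0 < R \<and> R \<le> 1 \<and> R * cmod \<mu> < 1 \<and>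
     (\<forall>u. 0 < u \<and> u < R \<longrightarrow> Re (log_primitive \<mu> (of_real u)) < - shift_window (period \<mu>) \<and>
        shift_window (period \<mu>) - period \<mu> < Re (log_primitive_neg \<mu> (- of_real u)))"

lemma admissible_radius_exists: "\<exists>R. admissible_radius \<mu> R"
proof -
  define M where "M = shift_window (period \<mu>)"
  have "\<forall>\<^sub>F u in at_right 0. Re \<mu> * ln u - 1 / u < - M" by real_asymp
  moreover have "\<forall>\<^sub>F u in at_right 0. M - 2 * pi * Im \<mu> < Re \<mu> * ln u - pi * Im \<mu> + 1 / u" by real_asymp
  ultimately have "\<forall>\<^sub>F u in at_right 0.
      Re \<mu> * ln u - 1 / u < - M \<and> M - 2 * pi * Im \<mu> < Re \<mu> * ln u - pi * Im \<mu> + 1 / u"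
    by (rule eventually_conj)
  then obtain b where "b > 0" and b: "\<And>u. 0 < u \<Longrightarrow> u < b \<Longrightarrow>
      Re \<mu> * ln u - 1 / u < - M \<and> M - 2 * pi * Im \<mu> < Re \<mu> * ln u - pi * Im \<mu> + 1 / u"
    unfolding eventually_at_right_field by auto
  define R where "R = min b (1 / (cmod \<mu> + 1))"
  have pos: "0 < cmod \<mu> + 1"
    using add_nonneg_pos[OF norm_ge_zero zero_less_one] .
  have "R * cmod \<mu> \<le> 1 / (cmod \<mu> + 1) * cmod \<mu>"
    by (rule mult_right_mono) (simp_all add: R_def)
  also have "\<dots> < 1"
    using pos by (simp add: divide_less_eq)
  finally have "R * cmod \<mu> < 1" .
  moreover have "0 < R" "R \<le> 1"
    using \<open>b > 0\<close> pos by (simp_all add: R_def min_le_iff_disj divide_le_eq_1)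
  moreover have "Re (log_primitive \<mu> (of_real u)) < - M \<and> M - period \<mu> < Re (log_primitive_neg \<mu> (- of_real u))"
    if "0 < u" "u < R" for u
    using b[of u] that by (simp add: Re_log_primitive_of_real Re_log_primitive_neg_of_real period_def R_def)
  ultimately show ?thesis
    unfolding admissible_radius_def M_def by blast
qed

lemma admissible_radius_mono:
  assumes "admissible_radius \<mu> R" "0 < r" "r \<le> R"
  shows "admissible_radius \<mu> r"
proof -
  have "r * cmod \<mu> \<le> R * cmod \<mu>"
    using assms(3) by (rule mult_right_mono) simp
  with assms show ?thesis
    unfolding admissible_radius_def by auto
qed



lemma shifted_Re_germ_glued_integral:
  assumes R: "admissible_radius \<mu> R" and w: "w \<noteq> 0" "cmod w < R"
  shows "shifted_Re_germ (glued_integral \<mu>) w (\<mu> / w + 1 / w\<^sup>2)"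
proof -
  let ?M = "shift_window (period \<mu>)" and ?c = "\<mu> / w + 1 / w\<^sup>2"
  have germ_on: "shifted_Re_germ (glued_integral \<mu>) w ?c"
    if "open U" "w \<in> U" "K holomorphic_on U" "(K has_field_derivative ?c) (at w)"
       "\<And>z. z \<in> U \<Longrightarrow> glued_integral \<mu> z = smooth_shift \<beta> (Re (K z))" for U K \<beta>
    unfolding shifted_Re_germ_def using that DERIV_imp_deriv by blast
  consider "Im w > 0" | "Im w < 0" | "Im w = 0" "Re w > 0" | "Im w = 0" "Re w < 0"
    using w(1) complex_eqI[of w 0] by force
  then show ?thesis
  proof cases
    case 1
    show ?thesis
      by (rule germ_on[of "{z. Im z > 0}" _ 0])
        (use 1 in \<open>auto simp: open_halfspace_Im_gt glued_integral_def complex_nonpos_Reals_iff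
          intro: log_primitive_holomorphic_on log_primitive_has_field_derivative\<close>)
  next
    case 2
    show ?thesis
      by (rule germ_on[of "{z. Im z < 0}" _ "period \<mu>"])
        (use 2 in \<open>auto simp: open_halfspace_Im_lt glued_integral_def complex_nonpos_Reals_iff
          intro: log_primitive_holomorphic_on log_primitive_has_field_derivative\<close>)
  next
    case 3
    let ?U = "{z. Re z > 0} \<inter> (\<lambda>z. Re (log_primitive \<mu> z)) -` {..< - ?M}"
    have holo: "log_primitive \<mu> holomorphic_on {z. Re z > 0}"
      by (rule log_primitive_holomorphic_on) (auto simp: complex_nonpos_Reals_iff)
    have "open ?U"
      using holo by (intro continuous_open_preimage continuous_intros holomorphic_on_imp_continuous_on)
        (auto simp: open_halfspace_Re_gt)
    moreover have "w \<in> ?U"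
      using R w 3 complex_eqI[of w "of_real (Re w)"] unfolding admissible_radius_def
      by (auto simp: cmod_eq_Re)
    ultimately show ?thesis
      using 3 smooth_shift_left
      by (intro germ_on[of ?U _ 0]) (auto simp: glued_integral_def complex_nonpos_Reals_iff
          intro: holomorphic_on_subset[OF holo] log_primitive_has_field_derivative)
  next
    case 4
    let ?U = "{z. Re z < 0} \<inter> (\<lambda>z. Re (log_primitive_neg \<mu> z)) -` {?M - period \<mu> <..}"
    have holo: "log_primitive_neg \<mu> holomorphic_on {z. Re z < 0}"
      by (rule log_primitive_neg_holomorphic_on) (auto simp: complex_nonpos_Reals_iff)
    have "open ?U"
      using holo by (intro continuous_open_preimage continuous_intros holomorphic_on_imp_continuous_on)
        (auto simp: open_halfspace_Re_lt)
    moreover have "w \<in> ?U"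
    proof -
      have "0 < - Re w" "- Re w < R"
        using w 4 by (auto simp: cmod_eq_Re)
      then have "?M - period \<mu> < Re (log_primitive_neg \<mu> (- of_real (- Re w)))"
        using R unfolding admissible_radius_def by blast
      moreover have "- of_real (- Re w) = w"
        using 4 by (simp add: complex_eq_iff)
      ultimately show ?thesis using 4 by simp
    qed
    moreover have "glued_integral \<mu> z = Re (log_primitive_neg \<mu> z)" if "z \<in> ?U" for z
    proof (cases "Im z < 0")
      case True
      then have "?M \<le> Re (log_primitive \<mu> z)"
        using that Re_log_primitive_neg_lower[of z \<mu>] by simp
      then show ?thesis
        using True Re_log_primitive_neg_lower[of z \<mu>] smooth_shift_right by (simp add: glued_integral_def)
    next
      case False
      then show ?thesis using that log_primitive_neg_upper by (simp add: glued_integral_def)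
    qed
    ultimately show ?thesis
      using 4 by (intro germ_on[of ?U _ 0]) (auto simp: complex_nonpos_Reals_iff
          intro: holomorphic_on_subset[OF holo] log_primitive_neg_has_field_derivative)
  qed
qed

lemma norm_power_le_norm:
  fixes y :: "'a::real_normed_div_algebra"
  assumes "norm y \<le> 1" "N \<ge> 1"
  shows "norm (y ^ N) \<le> norm y"
  using power_decreasing[OF assms(2) norm_ge_zero assms(1)] by (simp add: norm_power)

lemma admissible_radius_power:
  assumes "admissible_radius \<mu> r" "N \<ge> 1"
  shows "admissible_radius \<mu> (r ^ N)"
proof -
  have "0 < r" "r \<le> 1"
    using assms(1) by (auto simp: admissible_radius_def)
  then have "r ^ N \<le> r"
    using norm_power_le_norm[of r N] assms(2) by simp
  with \<open>0 < r\<close> show ?thesis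
    using admissible_radius_mono[OF assms(1)] by simp
qed

lemma log_primitive_pullback_deriv:
  fixes y \<mu> :: complex
  assumes "y \<noteq> 0" "N \<ge> 1"
  shows "(\<mu> / y ^ N + 1 / (y ^ N)\<^sup>2) * deriv (\<lambda>z. z ^ N) y = of_nat N * (\<mu> / y + 1 / y ^ (N + 1))"
proof -
  obtain m where m: "N = Suc m" using assms(2) by (cases N) auto
  have "((\<lambda>z. z ^ N) has_field_derivative of_nat N * (1 * y ^ (N - Suc 0))) (at y)"
    by (rule DERIV_power[OF DERIV_ident])
  then have "deriv (\<lambda>z. z ^ N) y = of_nat N * y ^ m"
    using m by (simp add: DERIV_imp_deriv)
  then show ?thesis
    using assms(1) unfolding m by (simp add: field_simps power2_eq_square)
qed

lemma log_primitive_pullback_deriv_nonzero: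
  fixes y \<mu> :: complex
  assumes "y \<noteq> 0" "N \<ge> 1" "cmod y \<le> 1" "cmod y * cmod \<mu> < 1"
  shows "\<mu> / y + 1 / y ^ (N + 1) \<noteq> 0"
proof
  assume "\<mu> / y + 1 / y ^ (N + 1) = 0"
  then have "1 + \<mu> * y ^ N = 0"
    using assms(1) by (simp add: field_simps)
  then have "\<mu> * y ^ N = - 1"
    by (simp add: add_eq_0_iff)
  then have "cmod (y ^ N) * cmod \<mu> = 1"
    by (metis mult.commute norm_minus_cancel norm_mult norm_one)
  moreover have "cmod (y ^ N) * cmod \<mu> \<le> cmod y * cmod \<mu>"
    using norm_power_le_norm[OF assms(3,2)] by (rule mult_right_mono) simp
  ultimately show False using assms(4) by simp
qed

lemma shifted_Re_germ_glued_integral_power: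
  assumes R: "admissible_radius \<mu> R" and y: "y \<noteq> 0" "cmod y < R" and "N \<ge> 1"
  shows "shifted_Re_germ (\<lambda>z. glued_integral \<mu> (z ^ N)) y (of_nat N * (\<mu> / y + 1 / y ^ (N + 1)))"
proof -
  have "cmod y \<le> 1"
    using y R by (simp add: admissible_radius_def)
  then have "cmod (y ^ N) < R"
    using norm_power_le_norm[OF _ \<open>N \<ge> 1\<close>] y(2) by fastforce
  then have "shifted_Re_germ (glued_integral \<mu>) (y ^ N) (\<mu> / y ^ N + 1 / (y ^ N)\<^sup>2)"
    using y by (intro shifted_Re_germ_glued_integral[OF R]) simp_all
  from shifted_Re_germ_compose[where h = "\<lambda>z. z ^ N", OF this open_UNIV UNIV_I] show ?thesis
    using log_primitive_pullback_deriv[OF y(1) \<open>N \<ge> 1\<close>] by (simp add: holomorphic_intros)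
qed

lemma glued_integral_power_submersion:
  assumes R: "admissible_radius \<mu> R" and "N \<ge> 1"
  shows "submersion_on (ball 0 R - {0}) (\<lambda>y. glued_integral \<mu> (y ^ N))"
proof (rule submersion_on_if_shifted_Re_germs)
  fix y :: complex assume y: "y \<in> ball 0 R - {0}"
  then have "cmod y \<le> 1" "cmod y * cmod \<mu> < 1"
    using R mult_right_mono[of "cmod y" R "cmod \<mu>"] by (auto simp: admissible_radius_def)
  with y \<open>N \<ge> 1\<close> have "of_nat N * (\<mu> / y + 1 / y ^ (N + 1)) \<noteq> 0"
    using log_primitive_pullback_deriv_nonzero by auto
  moreover have "shifted_Re_germ (\<lambda>y. glued_integral \<mu> (y ^ N)) y (of_nat N * (\<mu> / y + 1 / y ^ (N + 1)))"
    using y by (intro shifted_Re_germ_glued_integral_power[OF R _ _ \<open>N \<ge> 1\<close>]) auto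
  ultimately show "\<exists>c. c \<noteq> 0 \<and> shifted_Re_germ (\<lambda>y. glued_integral \<mu> (y ^ N)) y c"
    by blast
qed

lemma glued_integral_submersion:
  "admissible_radius \<mu> R \<Longrightarrow> submersion_on (ball 0 R - {0}) (glued_integral \<mu>)"
  using glued_integral_power_submersion[of \<mu> R 1] by simp

lemma glued_integral_power_first_integral:
  assumes R: "admissible_radius \<mu> R" and "q > 0" "k \<ge> 1"
  shows "first_integral (omega1 \<mu> q k) (ball 0 R - {0}) (\<lambda>y. glued_integral \<mu> (y ^ (q * k)))"
proof (rule first_integral_if_derivative_multiple)
  fix y :: complex assume "y \<in> ball 0 R - {0}"
  then have "shifted_Re_germ (\<lambda>z. glued_integral \<mu> (z ^ (q * k))) y
      (of_nat (q * k) * (\<mu> / y + 1 / y ^ (q * k + 1)))"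
    using assms by (intro shifted_Re_germ_glued_integral_power[OF R]) auto
  then obtain l where l: "((\<lambda>z. glued_integral \<mu> (z ^ (q * k))) has_derivative
      (\<lambda>v. l * Re (of_nat (q * k) * (\<mu> / y + 1 / y ^ (q * k + 1)) * v))) (at y)"
    using shifted_Re_germ_has_derivative by blast
  have scale: "of_nat (q * k) * (\<mu> / y + 1 / y ^ (q * k + 1)) =
      of_real (real k) * (\<mu> * of_nat q / y + of_nat q / y ^ (q * k + 1))"
    by (simp add: field_simps)
  have Re_scale: "Re (of_real r * z * v) = r * Re (z * v)" for r z v
    by (simp add: algebra_simps)
  show "\<exists>l. ((\<lambda>z. glued_integral \<mu> (z ^ (q * k))) has_derivative (\<lambda>v. l * omega1 \<mu> q k y v)) (at y)"
    using l unfolding scale Re_scale omega1_def[symmetric]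
    by (intro exI[of _ "l * real k"]) (simp only: mult.assoc)
qed

theorem lemma4p7:
  fixes p q k :: nat and \<mu> :: complex
  assumes "p > 0" and "q > 0" and "coprime p q" and "k \<ge> 1"
  shows "\<exists>r0>0. \<forall>r. 0 < r \<and> r < r0 \<longrightarrow>
           (\<exists>f g :: complex \<Rightarrow> real.
              submersion_on (ball 0 r - {0}) f \<and>
              first_integral (omega1 \<mu> q k) (ball 0 r - {0}) f \<and>
              submersion_on (ball 0 (r ^ (q * k)) - {0}) g \<and>
              (\<forall>y\<in>ball 0 r - {0}. f y = g (y ^ (q * k))))"
proof -
  obtain R where R: "admissible_radius \<mu> R"
    using admissible_radius_exists by blast
  have N: "q * k \<ge> 1"
    using assms(2,4) by simp
  show ?thesis
  proof (intro exI[of _ R] conjI allI impI)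
    show "0 < R"
      using R by (simp add: admissible_radius_def)
    fix r assume "0 < r \<and> r < R"
    then have r: "admissible_radius \<mu> r"
      using admissible_radius_mono[OF R] by simp
    show "\<exists>f g :: complex \<Rightarrow> real.
        submersion_on (ball 0 r - {0}) f \<and>
        first_integral (omega1 \<mu> q k) (ball 0 r - {0}) f \<and>
        submersion_on (ball 0 (r ^ (q * k)) - {0}) g \<and>
        (\<forall>y\<in>ball 0 r - {0}. f y = g (y ^ (q * k)))"
      using glued_integral_power_submersion[OF r N] glued_integral_power_first_integral[OF r assms(2,4)]
        glued_integral_submersion[OF admissible_radius_power[OF r N]]
      by blast
  qed
qed

end
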